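(* Let $(Z^n_k)_{n\in\mathbb N,1\le k\le n}$ be a triangular array of nonnegative, uniformly integrable random variables such that for each $n\in\mathbb N$ the random variables $Z^n_1,\dots,Z^n_n$ are pairwise uncorrelated. Then $\frac1n\sum_{k=1}^n(Z^n_k-EZ^n_k)\to0$ in probability as $n\to\infty$.
   Context: Random variables are only assumed integrable (no finite second moments are assumed); "pairwise uncorrelated" means $E[Z^n_kZ^n_l]=E[Z^n_k]E[Z^n_l]$ for $k\ne l$ (with the product integrable). *)

theory Defs
  imports "HOL-Probability.Probability"
begin

definition uniformly_integrable :: "'a measure \<Rightarrow> ('a \<Rightarrow> real) set \<Rightarrow> bool" where
  "uniformly_integrable M F \<longleftrightarrow>
     (\<forall>f\<in>F. integrable M f) \<and>
     (\<forall>e>0. \<exists>c. \<forall>f\<in>F.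
        (\<integral>x. \<bar>f x\<bar> * indicator {y\<in>space M. c \<le> \<bar>f y\<bar>} x \<partial>M) \<le> e)"

definition converges_in_probability ::
    "'a measure \<Rightarrow> (nat \<Rightarrow> 'a \<Rightarrow> real) \<Rightarrow> ('a \<Rightarrow> real) \<Rightarrow> bool" where
  "converges_in_probability M X Y \<longleftrightarrow>
     (\<forall>e>0. (\<lambda>n. measure M {x\<in>space M. e < \<bar>X n x - Y x\<bar>}) \<longlonglongrightarrow> 0)"

end

theory Submission
  imports Defs
begin

(* The proof is by truncation.  Cut every variable at a level c: Y = min X c.  The truncated
   variables are bounded by c and, because X \<ge> 0, their covariances are at most 2 K \<delta>, where K
   bounds the means and \<delta> bounds the tails E (X - c)^+.  Hence the centered truncated row sum
   has second moment at most n c^2 + n^2 2 K \<delta>, and so, by the Cauchy-Schwarz type bound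
   E |f| \<le> sqrt (E f^2), first absolute moment at most sqrt (n c^2 + n^2 2 K \<delta>).  The discarded
   excesses X - Y are nonnegative and cost at most 2 n \<delta> in L1.  Dividing by n gives
     E |row average of X - E X| \<le> sqrt (c^2 / n + 2 K \<delta>) + 2 \<delta>,
   and uniform integrability provides K and, for every \<delta> > 0, a level c.  Choosing \<delta> small,
   then c, then n large shows that the centered row averages tend to 0 in L1, and Markov's
   inequality turns L1 convergence into convergence in probability. *)

context prob_space
begin

text \<open>The first absolute moment is dominated by the square root of the second moment;
  this is nonnegativity of the variance of \<open>\<bar>f\<bar>\<close>.\<close>

lemma integral_abs_le_sqrt_second_moment:
  fixes f :: "'a \<Rightarrow> real"
  assumes "integrable M f" and "integrable M (\<lambda>x. (f x)\<^sup>2)"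
  shows "(\<integral>x. \<bar>f x\<bar> \<partial>M) \<le> sqrt (\<integral>x. (f x)\<^sup>2 \<partial>M)"
proof (rule real_le_rsqrt)
  have "0 \<le> variance (\<lambda>x. \<bar>f x\<bar>)"
    by (rule variance_positive)
  also have "\<dots> = (\<integral>x. (f x)\<^sup>2 \<partial>M) - (\<integral>x. \<bar>f x\<bar> \<partial>M)\<^sup>2"
    using assms by (subst variance_eq) auto
  finally show "(\<integral>x. \<bar>f x\<bar> \<partial>M)\<^sup>2 \<le> (\<integral>x. (f x)\<^sup>2 \<partial>M)"
    by simp
qed

lemma centered_sum_second_moment:
  fixes Y :: "'i \<Rightarrow> 'a \<Rightarrow> real"
  assumes int: "\<And>i. i \<in> I \<Longrightarrow> integrable M (Y i)"
    and int_prod: "\<And>i j. i \<in> I \<Longrightarrow> j \<in> I \<Longrightarrow> integrable M (\<lambda>x. Y i x * Y j x)"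
  shows "integrable M (\<lambda>x. ((\<Sum>i\<in>I. Y i x) - (\<Sum>i\<in>I. expectation (Y i)))\<^sup>2)"
    and "expectation (\<lambda>x. ((\<Sum>i\<in>I. Y i x) - (\<Sum>i\<in>I. expectation (Y i)))\<^sup>2)
       = (\<Sum>i\<in>I. \<Sum>j\<in>I. expectation (\<lambda>x. Y i x * Y j x) - expectation (Y i) * expectation (Y j))"
proof -
  define S where "S x = (\<Sum>i\<in>I. Y i x)" for x
  have square: "(S x)\<^sup>2 = (\<Sum>i\<in>I. \<Sum>j\<in>I. Y i x * Y j x)" for x
    by (simp add: S_def power2_eq_square sum_product)
  have int_S: "integrable M S"
    unfolding S_def using int by auto
  have int_S2: "integrable M (\<lambda>x. (S x)\<^sup>2)"
    unfolding square using int_prod by auto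
  have mean_S: "expectation S = (\<Sum>i\<in>I. expectation (Y i))"
    unfolding S_def using int by (simp add: Bochner_Integration.integral_sum)
  have mean_S2: "expectation (\<lambda>x. (S x)\<^sup>2) = (\<Sum>i\<in>I. \<Sum>j\<in>I. expectation (\<lambda>x. Y i x * Y j x))"
    unfolding square using int_prod
    by (simp add: Bochner_Integration.integral_sum integrable_sum)
  have centered: "(\<lambda>x. ((\<Sum>i\<in>I. Y i x) - (\<Sum>i\<in>I. expectation (Y i)))\<^sup>2)
      = (\<lambda>x. (S x - expectation S)\<^sup>2)"
    by (simp add: S_def mean_S)
  have "integrable M (\<lambda>x. (S x - expectation S)\<^sup>2)"
    unfolding power2_diff using int_S int_S2 by simp
  then show "integrable M (\<lambda>x. ((\<Sum>i\<in>I. Y i x) - (\<Sum>i\<in>I. expectation (Y i)))\<^sup>2)"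
    by (simp only: centered)
  have "expectation (\<lambda>x. (S x - expectation S)\<^sup>2) = expectation (\<lambda>x. (S x)\<^sup>2) - (expectation S)\<^sup>2"
    by (rule variance_eq[OF int_S int_S2])
  then show "expectation (\<lambda>x. ((\<Sum>i\<in>I. Y i x) - (\<Sum>i\<in>I. expectation (Y i)))\<^sup>2)
       = (\<Sum>i\<in>I. \<Sum>j\<in>I. expectation (\<lambda>x. Y i x * Y j x) - expectation (Y i) * expectation (Y j))"
    unfolding centered mean_S2 mean_S
    by (simp add: power2_eq_square sum_product sum_subtractf)
qed

lemma bounded_variance_le:
  fixes Y :: "'a \<Rightarrow> real"
  assumes "Y \<in> borel_measurable M" and bounded: "\<And>x. x \<in> space M \<Longrightarrow> 0 \<le> Y x \<and> Y x \<le> c"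
  shows "expectation (\<lambda>x. Y x * Y x) - expectation Y * expectation Y \<le> c\<^sup>2"
proof -
  have "expectation (\<lambda>x. Y x * Y x) \<le> expectation (\<lambda>x. c * c)"
    using assms by (intro integral_mono integrable_const_bound[where B="c * c"])
      (auto simp: abs_mult intro!: mult_mono dest: order_trans)
  moreover have "expectation (\<lambda>x. c * c) = c\<^sup>2"
    by (simp add: prob_space power2_eq_square)
  moreover have "0 \<le> expectation Y * expectation Y"
    by simp
  ultimately show ?thesis
    by linarith
qed

text \<open>L1 bound for a centered sum of \<open>N\<close> variables with values in \<open>[0, c]\<close> whose pairwise
  covariances are at most \<open>d \<ge> 0\<close>: the \<open>N\<close> variances are at most \<open>c\<^sup>2\<close>, so the
  second moment of the centered sum is at most \<open>N c\<^sup>2 + N\<^sup>2 d\<close>.\<close>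

lemma centered_sum_abs_moment_le:
  fixes Y :: "'i \<Rightarrow> 'a \<Rightarrow> real"
  assumes fin: "finite I"
    and meas: "\<And>i. i \<in> I \<Longrightarrow> Y i \<in> borel_measurable M"
    and bounded: "\<And>i x. i \<in> I \<Longrightarrow> x \<in> space M \<Longrightarrow> 0 \<le> Y i x \<and> Y i x \<le> c"
    and cov: "\<And>i j. i \<in> I \<Longrightarrow> j \<in> I \<Longrightarrow> i \<noteq> j \<Longrightarrow>
       expectation (\<lambda>x. Y i x * Y j x) - expectation (Y i) * expectation (Y j) \<le> d"
    and "0 \<le> d"
  shows "(\<integral>x. \<bar>(\<Sum>i\<in>I. Y i x) - (\<Sum>i\<in>I. expectation (Y i))\<bar> \<partial>M)
      \<le> sqrt (real (card I) * c\<^sup>2 + (real (card I))\<^sup>2 * d)"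
proof -
  have bounded_prod: "\<And>x. x \<in> space M \<Longrightarrow> \<bar>Y i x * Y j x\<bar> \<le> c * c" if "i \<in> I" "j \<in> I" for i j
    using bounded[OF that(1)] bounded[OF that(2)]
    by (simp add: abs_mult) (meson mult_mono order_trans)
  have int: "integrable M (Y i)" if "i \<in> I" for i
    by (rule integrable_const_bound[where B=c]) (use bounded that meas in auto)
  have int_prod: "integrable M (\<lambda>x. Y i x * Y j x)" if "i \<in> I" "j \<in> I" for i j
    by (rule integrable_const_bound[where B="c*c"]) (use bounded_prod meas that in auto)
  have entry: "expectation (\<lambda>x. Y i x * Y j x) - expectation (Y i) * expectation (Y j)
      \<le> (if i = j then c\<^sup>2 else 0) + d" if ij: "i \<in> I" "j \<in> I" for i j
  proof (cases "i = j")
    case True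
    then show ?thesis
      using bounded_variance_le[OF meas bounded, OF ij(1) ij(1)] \<open>0 \<le> d\<close> by simp
  qed (use cov ij in simp)
  have "expectation (\<lambda>x. ((\<Sum>i\<in>I. Y i x) - (\<Sum>i\<in>I. expectation (Y i)))\<^sup>2)
      = (\<Sum>i\<in>I. \<Sum>j\<in>I. expectation (\<lambda>x. Y i x * Y j x) - expectation (Y i) * expectation (Y j))"
    by (rule centered_sum_second_moment(2)) (use int int_prod in auto)
  also have "\<dots> \<le> (\<Sum>i\<in>I. \<Sum>j\<in>I. (if i = j then c\<^sup>2 else 0) + d)"
    by (intro sum_mono entry)
  also have "\<dots> = real (card I) * c\<^sup>2 + (real (card I))\<^sup>2 * d"
    using fin by (simp add: sum.distrib power2_eq_square algebra_simps)
  finally have second_moment: "expectation (\<lambda>x. ((\<Sum>i\<in>I. Y i x) - (\<Sum>i\<in>I. expectation (Y i)))\<^sup>2)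
      \<le> real (card I) * c\<^sup>2 + (real (card I))\<^sup>2 * d" .
  have "(\<integral>x. \<bar>(\<Sum>i\<in>I. Y i x) - (\<Sum>i\<in>I. expectation (Y i))\<bar> \<partial>M)
      \<le> sqrt (expectation (\<lambda>x. ((\<Sum>i\<in>I. Y i x) - (\<Sum>i\<in>I. expectation (Y i)))\<^sup>2))"
    using int centered_sum_second_moment(1)[OF int int_prod]
    by (intro integral_abs_le_sqrt_second_moment) auto
  also have "\<dots> \<le> sqrt (real (card I) * c\<^sup>2 + (real (card I))\<^sup>2 * d)"
    using second_moment by simp
  finally show ?thesis .
qed

lemma expectation_truncation_split:
  fixes f :: "'a \<Rightarrow> real"
  assumes "integrable M f"
  shows "expectation f = expectation (\<lambda>x. min (f x) c) + expectation (\<lambda>x. max (f x - c) 0)"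
proof -
  have "expectation f = expectation (\<lambda>x. min (f x) c + max (f x - c) 0)"
    by (intro Bochner_Integration.integral_cong) (auto simp: min_def max_def)
  also have "\<dots> = expectation (\<lambda>x. min (f x) c) + expectation (\<lambda>x. max (f x - c) 0)"
    using assms by (intro Bochner_Integration.integral_add) auto
  finally show ?thesis .
qed

text \<open>Truncating two nonnegative uncorrelated variables at a level \<open>c \<ge> 0\<close> creates covariance at
  most \<open>2 K \<delta>\<close>, when both means are at most \<open>K\<close> and both tails \<open>E (X - c)\<^sup>+\<close> at most \<open>\<delta>\<close>:
  truncation can only decrease the product, and it lowers each mean by the tail.\<close>

lemma truncated_covariance_le:
  fixes X Y :: "'a \<Rightarrow> real"
  assumes nonneg: "\<And>x. x \<in> space M \<Longrightarrow> 0 \<le> X x \<and> 0 \<le> Y x"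
    and int: "integrable M X" "integrable M Y" "integrable M (\<lambda>x. X x * Y x)"
    and uncorr: "expectation (\<lambda>x. X x * Y x) = expectation X * expectation Y"
    and mean: "expectation X \<le> K" "expectation Y \<le> K"
    and "0 \<le> c"
    and tail: "expectation (\<lambda>x. max (X x - c) 0) \<le> \<delta>" "expectation (\<lambda>x. max (Y x - c) 0) \<le> \<delta>"
  shows "expectation (\<lambda>x. min (X x) c * min (Y x) c)
      - expectation (\<lambda>x. min (X x) c) * expectation (\<lambda>x. min (Y x) c) \<le> 2 * K * \<delta>"
proof -
  note [measurable] = borel_measurable_integrable[OF int(1)] borel_measurable_integrable[OF int(2)]
  have int_prod: "integrable M (\<lambda>x. min (X x) c * min (Y x) c)"
    by (rule integrable_const_bound[where B="c * c"])
       (use nonneg \<open>0 \<le> c\<close> in \<open>auto simp: abs_mult intro!: mult_mono\<close>)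
  note split_X = expectation_truncation_split[OF int(1), of c]
    and split_Y = expectation_truncation_split[OF int(2), of c]
  have "expectation (\<lambda>x. min (X x) c * min (Y x) c) \<le> expectation (\<lambda>x. X x * Y x)"
    using int_prod int(3) nonneg \<open>0 \<le> c\<close> by (intro integral_mono) (auto intro!: mult_mono)
  also have "\<dots> = expectation X * expectation Y"
    by (rule uncorr)
  also have "\<dots> = expectation X * expectation (\<lambda>x. max (Y x - c) 0)
      + expectation (\<lambda>x. max (X x - c) 0) * expectation (\<lambda>x. min (Y x) c)
      + expectation (\<lambda>x. min (X x) c) * expectation (\<lambda>x. min (Y x) c)"
    unfolding split_X split_Y by (simp add: algebra_simps)
  also have "\<dots> \<le> K * \<delta> + \<delta> * K + expectation (\<lambda>x. min (X x) c) * expectation (\<lambda>x. min (Y x) c)"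
  proof -
    have mean_nonneg: "0 \<le> expectation X" "0 \<le> expectation (\<lambda>x. min (Y x) c)"
      using nonneg \<open>0 \<le> c\<close> by (auto intro!: integral_nonneg)
    have tail_nonneg: "0 \<le> expectation (\<lambda>x. max (X x - c) 0)" "0 \<le> expectation (\<lambda>x. max (Y x - c) 0)"
      by (auto intro!: integral_nonneg)
    have bounds: "expectation (\<lambda>x. min (Y x) c) \<le> K" "0 \<le> \<delta>" "0 \<le> K"
      using split_Y tail tail_nonneg mean mean_nonneg by linarith+
    have "expectation X * expectation (\<lambda>x. max (Y x - c) 0) \<le> K * \<delta>"
      and "expectation (\<lambda>x. max (X x - c) 0) * expectation (\<lambda>x. min (Y x) c) \<le> \<delta> * K"
      by (rule mult_mono; use bounds mean tail mean_nonneg tail_nonneg in linarith)+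
    then show ?thesis
      by linarith
  qed
  finally show ?thesis
    by simp
qed

lemma centered_abs_moment_le_of_le:
  fixes f g :: "'a \<Rightarrow> real"
  assumes int: "integrable M f" "integrable M g"
    and le: "\<And>x. x \<in> space M \<Longrightarrow> g x \<le> f x"
  shows "(\<integral>x. \<bar>f x - expectation f\<bar> \<partial>M)
      \<le> (\<integral>x. \<bar>g x - expectation g\<bar> \<partial>M) + 2 * (expectation f - expectation g)"
proof -
  have gap: "expectation g \<le> expectation f"
    using int le by (intro integral_mono) auto
  have pointwise: "\<bar>f x - expectation f\<bar>
      \<le> \<bar>g x - expectation g\<bar> + (f x - g x) + (expectation f - expectation g)" if "x \<in> space M" for x
    using abs_triangle_ineq[of "g x - expectation g" "(f x - g x) + (expectation f - expectation g)"]
      le[OF that] gap by simp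
  have "(\<integral>x. \<bar>f x - expectation f\<bar> \<partial>M)
      \<le> (\<integral>x. \<bar>g x - expectation g\<bar> + (f x - g x) + (expectation f - expectation g) \<partial>M)"
    using int pointwise by (intro integral_mono) auto
  also have "\<dots> = (\<integral>x. \<bar>g x - expectation g\<bar> \<partial>M) + 2 * (expectation f - expectation g)"
    using int by (simp add: prob_space)
  finally show ?thesis .
qed

text \<open>Truncating every summand at level \<open>c\<close> changes the centered first absolute moment of a sum
  by at most twice the total tail mass; the truncated sum is pointwise below the original one.\<close>

lemma centered_sum_truncation_L1:
  fixes X :: "'i \<Rightarrow> 'a \<Rightarrow> real"
  assumes int: "\<And>i. i \<in> I \<Longrightarrow> integrable M (X i)"
  shows "(\<integral>x. \<bar>\<Sum>i\<in>I. X i x - expectation (X i)\<bar> \<partial>M)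
      \<le> (\<integral>x. \<bar>\<Sum>i\<in>I. min (X i x) c - expectation (\<lambda>y. min (X i y) c)\<bar> \<partial>M)
        + 2 * (\<Sum>i\<in>I. expectation (\<lambda>x. max (X i x - c) 0))"
proof -
  have mean_X: "expectation (\<lambda>x. \<Sum>i\<in>I. X i x) = (\<Sum>i\<in>I. expectation (X i))"
    using int by (simp add: Bochner_Integration.integral_sum)
  have mean_Y: "expectation (\<lambda>x. \<Sum>i\<in>I. min (X i x) c) = (\<Sum>i\<in>I. expectation (\<lambda>y. min (X i y) c))"
    using int by (simp add: Bochner_Integration.integral_sum)
  have tails: "(\<Sum>i\<in>I. expectation (X i)) - (\<Sum>i\<in>I. expectation (\<lambda>y. min (X i y) c))
      = (\<Sum>i\<in>I. expectation (\<lambda>x. max (X i x - c) 0))"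
  proof (unfold sum_subtractf[symmetric], intro sum.cong refl)
    fix i
    assume "i \<in> I"
    show "expectation (X i) - expectation (\<lambda>y. min (X i y) c) = expectation (\<lambda>x. max (X i x - c) 0)"
      using expectation_truncation_split[OF int[OF \<open>i \<in> I\<close>], of c] by simp
  qed
  have "(\<integral>x. \<bar>(\<Sum>i\<in>I. X i x) - expectation (\<lambda>x. \<Sum>i\<in>I. X i x)\<bar> \<partial>M)
      \<le> (\<integral>x. \<bar>(\<Sum>i\<in>I. min (X i x) c) - expectation (\<lambda>x. \<Sum>i\<in>I. min (X i x) c)\<bar> \<partial>M)
        + 2 * (expectation (\<lambda>x. \<Sum>i\<in>I. X i x) - expectation (\<lambda>x. \<Sum>i\<in>I. min (X i x) c))"
    using int by (intro centered_abs_moment_le_of_le sum_mono) auto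
  then show ?thesis
    unfolding mean_X mean_Y tails by (simp add: sum_subtractf)
qed

text \<open>The truncated sum is controlled through its second moment, the tails in L1.\<close>

lemma centered_average_L1_bound:
  fixes X :: "'i \<Rightarrow> 'a \<Rightarrow> real"
  assumes fin: "finite I" and ne: "I \<noteq> {}"
    and int: "\<And>i. i \<in> I \<Longrightarrow> integrable M (X i)"
    and nonneg: "\<And>i x. i \<in> I \<Longrightarrow> x \<in> space M \<Longrightarrow> 0 \<le> X i x"
    and uncorr: "\<And>i j. i \<in> I \<Longrightarrow> j \<in> I \<Longrightarrow> i \<noteq> j \<Longrightarrow> integrable M (\<lambda>x. X i x * X j x) \<and>
        expectation (\<lambda>x. X i x * X j x) = expectation (X i) * expectation (X j)"
    and mean: "\<And>i. i \<in> I \<Longrightarrow> expectation (X i) \<le> K"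
    and "0 \<le> c"
    and tail: "\<And>i. i \<in> I \<Longrightarrow> expectation (\<lambda>x. max (X i x - c) 0) \<le> \<delta>"
  shows "(\<integral>x. \<bar>(1 / real (card I)) * (\<Sum>i\<in>I. X i x - expectation (X i))\<bar> \<partial>M)
      \<le> sqrt (c\<^sup>2 / real (card I) + 2 * K * \<delta>) + 2 * \<delta>"
proof -
  define N where "N = real (card I)"
  have N: "0 < N"
    using fin ne by (simp add: N_def card_gt_0_iff)
  obtain i0 where i0: "i0 \<in> I"
    using ne by auto
  have "0 \<le> expectation (X i0)" "0 \<le> expectation (\<lambda>x. max (X i0 x - c) 0)"
    using nonneg[OF i0] by (auto intro!: integral_nonneg)
  then have "0 \<le> K" "0 \<le> \<delta>"
    using mean[OF i0] tail[OF i0] by linarith+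
  have truncated: "(\<integral>x. \<bar>\<Sum>i\<in>I. min (X i x) c - expectation (\<lambda>y. min (X i y) c)\<bar> \<partial>M)
      \<le> sqrt (N * c\<^sup>2 + N\<^sup>2 * (2 * K * \<delta>))"
    unfolding sum_subtractf N_def
  proof (rule centered_sum_abs_moment_le[OF fin])
    show "(\<lambda>x. min (X i x) c) \<in> borel_measurable M" if "i \<in> I" for i
      using borel_measurable_integrable[OF int[OF that]] by measurable
    show "0 \<le> min (X i x) c \<and> min (X i x) c \<le> c" if "i \<in> I" "x \<in> space M" for i x
      using nonneg[OF that] \<open>0 \<le> c\<close> by simp
    show "expectation (\<lambda>x. min (X i x) c * min (X j x) c)
        - expectation (\<lambda>x. min (X i x) c) * expectation (\<lambda>x. min (X j x) c) \<le> 2 * K * \<delta>"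
      if "i \<in> I" "j \<in> I" "i \<noteq> j" for i j
      using that by (intro truncated_covariance_le) (auto simp: nonneg int uncorr mean tail \<open>0 \<le> c\<close>)
  qed (use \<open>0 \<le> K\<close> \<open>0 \<le> \<delta>\<close> in simp)
  have tails: "(\<Sum>i\<in>I. expectation (\<lambda>x. max (X i x - c) 0)) \<le> N * \<delta>"
    using sum_mono[of I _ "\<lambda>_. \<delta>", OF tail] by (simp add: N_def)
  have "(\<integral>x. \<bar>\<Sum>i\<in>I. X i x - expectation (X i)\<bar> \<partial>M)
      \<le> (\<integral>x. \<bar>\<Sum>i\<in>I. min (X i x) c - expectation (\<lambda>y. min (X i y) c)\<bar> \<partial>M)
        + 2 * (\<Sum>i\<in>I. expectation (\<lambda>x. max (X i x - c) 0))"
    by (rule centered_sum_truncation_L1) (rule int)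
  also have "\<dots> \<le> sqrt (N * c\<^sup>2 + N\<^sup>2 * (2 * K * \<delta>)) + N * (2 * \<delta>)"
    using truncated tails by simp
  also have "N * c\<^sup>2 + N\<^sup>2 * (2 * K * \<delta>) = N\<^sup>2 * (c\<^sup>2 / N + 2 * K * \<delta>)"
    using N by (simp add: power2_eq_square field_simps)
  also have "sqrt (N\<^sup>2 * (c\<^sup>2 / N + 2 * K * \<delta>)) + N * (2 * \<delta>) = N * (sqrt (c\<^sup>2 / N + 2 * K * \<delta>) + 2 * \<delta>)"
    using N by (subst real_sqrt_mult) (simp add: distrib_left)
  finally show ?thesis
    using N by (simp add: N_def abs_mult field_simps)
qed

text \<open>Uniform integrability in the form used here: the tails \<open>E (\<bar>f\<bar> - c)\<^sup>+\<close> are uniformly small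
  for a suitable level \<open>c \<ge> 0\<close>, since \<open>(\<bar>f\<bar> - c)\<^sup>+ \<le> \<bar>f\<bar> 1{\<bar>f\<bar> \<ge> c}\<close>.\<close>

lemma uniformly_integrable_tail:
  assumes ui: "uniformly_integrable M F" and "0 < \<delta>"
  shows "\<exists>c\<ge>0. \<forall>f\<in>F. expectation (\<lambda>x. max (\<bar>f x\<bar> - c) 0) \<le> \<delta>"
proof -
  obtain c where c: "\<And>f. f \<in> F \<Longrightarrow>
      (\<integral>x. \<bar>f x\<bar> * indicator {y\<in>space M. c \<le> \<bar>f y\<bar>} x \<partial>M) \<le> \<delta>"
    using ui \<open>0 < \<delta>\<close> unfolding uniformly_integrable_def by blast
  have "expectation (\<lambda>x. max (\<bar>f x\<bar> - max c 0) 0) \<le> \<delta>" if f: "f \<in> F" for f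
  proof -
    have int: "integrable M f"
      using ui f unfolding uniformly_integrable_def by blast
    note [measurable] = borel_measurable_integrable[OF int]
    have int_tail: "integrable M (\<lambda>x. max (\<bar>f x\<bar> - max c 0) 0)"
      by (rule Bochner_Integration.integrable_bound[OF integrable_abs[OF int]]) auto
    have int_cut: "integrable M (\<lambda>x. \<bar>f x\<bar> * indicator {y\<in>space M. c \<le> \<bar>f y\<bar>} x)"
      by (rule Bochner_Integration.integrable_bound[OF integrable_abs[OF int]])
         (auto simp: indicator_def)
    have "expectation (\<lambda>x. max (\<bar>f x\<bar> - max c 0) 0)
        \<le> (\<integral>x. \<bar>f x\<bar> * indicator {y\<in>space M. c \<le> \<bar>f y\<bar>} x \<partial>M)"
      using int_tail int_cut by (intro integral_mono) (auto simp: indicator_def)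
    then show ?thesis
      using c[OF f] by linarith
  qed
  then show ?thesis
    by (intro exI[of _ "max c 0"]) auto
qed

lemma uniformly_integrable_bounded:
  assumes ui: "uniformly_integrable M F"
  shows "\<exists>K. \<forall>f\<in>F. expectation (\<lambda>x. \<bar>f x\<bar>) \<le> K"
proof -
  obtain c where "0 \<le> c" and c: "\<And>f. f \<in> F \<Longrightarrow> expectation (\<lambda>x. max (\<bar>f x\<bar> - c) 0) \<le> 1"
    using uniformly_integrable_tail[OF ui, of 1] by auto
  have "expectation (\<lambda>x. \<bar>f x\<bar>) \<le> 1 + c" if f: "f \<in> F" for f
  proof -
    have int: "integrable M f"
      using ui f unfolding uniformly_integrable_def by blast
    note [measurable] = borel_measurable_integrable[OF int]
    have int_tail: "integrable M (\<lambda>x. max (\<bar>f x\<bar> - c) 0)"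
      using \<open>0 \<le> c\<close> by (intro Bochner_Integration.integrable_bound[OF integrable_abs[OF int]]) auto
    have "expectation (\<lambda>x. \<bar>f x\<bar>) \<le> expectation (\<lambda>x. max (\<bar>f x\<bar> - c) 0 + c)"
      using int int_tail by (intro integral_mono) auto
    also have "\<dots> \<le> 1 + c"
      using int_tail c[OF f] by (simp add: prob_space)
    finally show ?thesis .
  qed
  then show ?thesis
    by blast
qed

lemma converges_in_probability_if_L1:
  fixes X :: "nat \<Rightarrow> 'a \<Rightarrow> real"
  assumes int: "\<And>n. integrable M (\<lambda>x. X n x - Y x)"
    and L1: "(\<lambda>n. \<integral>x. \<bar>X n x - Y x\<bar> \<partial>M) \<longlonglongrightarrow> 0"
  shows "converges_in_probability M X Y"
  unfolding converges_in_probability_def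
proof (intro allI impI)
  fix e :: real
  assume "0 < e"
  have markov: "measure M {x\<in>space M. e < \<bar>X n x - Y x\<bar>} \<le> (\<integral>x. \<bar>X n x - Y x\<bar> \<partial>M) / e" for n
  proof -
    note [measurable] = borel_measurable_integrable[OF int[of n]]
    have "measure M {x\<in>space M. e < \<bar>X n x - Y x\<bar>} \<le> measure M {x\<in>space M. e \<le> \<bar>X n x - Y x\<bar>}"
      by (intro finite_measure_mono) auto
    also have "\<dots> \<le> (\<integral>x. \<bar>X n x - Y x\<bar> \<partial>M) / e"
      using int[of n] \<open>0 < e\<close> by (intro integral_Markov_inequality_measure[where A="space M"]) auto
    finally show ?thesis .
  qed
  show "(\<lambda>n. measure M {x\<in>space M. e < \<bar>X n x - Y x\<bar>}) \<longlonglongrightarrow> 0"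
    by (rule tendsto_sandwich[OF _ _ tendsto_const tendsto_divide_zero[OF L1, of e]])
       (use markov in auto)
qed

text \<open>The arithmetic closing the estimate of the next lemma: two second-moment contributions of size
  at most \<open>r\<^sup>2/8\<close> and a tail contribution \<open>2 \<delta> \<le> r/4\<close> stay below \<open>r\<close>.\<close>

lemma sqrt_add_plus_less:
  fixes a b \<delta> r :: real
  assumes "0 < r" and "a \<le> r\<^sup>2 / 8" and "b \<le> r\<^sup>2 / 8" and "\<delta> \<le> r / 8"
  shows "sqrt (a + b) + 2 * \<delta> < r"
proof -
  have "(r / 2)\<^sup>2 = r\<^sup>2 / 4"
    by (simp add: power_divide)
  then have "sqrt (a + b) \<le> r / 2"
    by (intro real_le_lsqrt) (use assms in linarith)+
  then show ?thesis
    using assms by linarith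
qed

text \<open>For a triangular array with uniformly bounded means and uniformly small tails, the centered
  row averages tend to \<open>0\<close> in L1: given the target accuracy choose first \<open>\<delta>\<close>, then the
  level \<open>c\<close>, then \<open>n\<close> so large that the bound of the previous lemma is below it.\<close>

lemma triangular_centered_average_L1:
  fixes Z :: "nat \<Rightarrow> nat \<Rightarrow> 'a \<Rightarrow> real"
  assumes int: "\<And>n k. 1 \<le> k \<Longrightarrow> k \<le> n \<Longrightarrow> integrable M (Z n k)"
    and nonneg: "\<And>n k x. 1 \<le> k \<Longrightarrow> k \<le> n \<Longrightarrow> x \<in> space M \<Longrightarrow> 0 \<le> Z n k x"
    and uncorr: "\<And>n k l. 1 \<le> k \<Longrightarrow> k \<le> n \<Longrightarrow> 1 \<le> l \<Longrightarrow> l \<le> n \<Longrightarrow> k \<noteq> l \<Longrightarrow>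
        integrable M (\<lambda>x. Z n k x * Z n l x) \<and>
        expectation (\<lambda>x. Z n k x * Z n l x) = expectation (Z n k) * expectation (Z n l)"
    and mean: "\<And>n k. 1 \<le> k \<Longrightarrow> k \<le> n \<Longrightarrow> expectation (Z n k) \<le> K"
    and tail: "\<And>\<delta>. 0 < \<delta> \<Longrightarrow> \<exists>c\<ge>0. \<forall>n k. 1 \<le> k \<longrightarrow> k \<le> n \<longrightarrow>
        expectation (\<lambda>x. max (Z n k x - c) 0) \<le> \<delta>"
  shows "(\<lambda>n. \<integral>x. \<bar>(1 / real n) * (\<Sum>k=1..n. Z n k x - expectation (Z n k))\<bar> \<partial>M) \<longlonglongrightarrow> 0"
proof (rule LIMSEQ_I)
  fix r :: real
  assume "0 < r"
  define \<delta> where "\<delta> = min (r / 8) (r\<^sup>2 / (16 * (\<bar>K\<bar> + 1)))"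
  have "0 < \<delta>" and \<delta>_le: "\<delta> \<le> r / 8"
    using \<open>0 < r\<close> unfolding \<delta>_def by (simp, linarith)
  have K_\<delta>: "2 * K * \<delta> \<le> r\<^sup>2 / 8"
  proof -
    have "2 * K * \<delta> \<le> 2 * (\<bar>K\<bar> + 1) * (r\<^sup>2 / (16 * (\<bar>K\<bar> + 1)))"
      by (rule mult_mono) (use \<open>0 < \<delta>\<close> in \<open>auto simp: \<delta>_def\<close>)
    also have "\<dots> = r\<^sup>2 / 8"
      by (simp add: add_pos_nonneg field_simps)
    finally show ?thesis .
  qed
  obtain c where "0 \<le> c"
    and c: "\<And>n k. 1 \<le> k \<Longrightarrow> k \<le> n \<Longrightarrow> expectation (\<lambda>x. max (Z n k x - c) 0) \<le> \<delta>"
    using tail[OF \<open>0 < \<delta>\<close>] by auto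
  show "\<exists>n0. \<forall>n\<ge>n0. norm ((\<integral>x. \<bar>(1 / real n) * (\<Sum>k=1..n. Z n k x - expectation (Z n k))\<bar> \<partial>M) - 0) < r"
  proof (intro exI allI impI)
    fix n
    assume n: "nat \<lceil>8 * c\<^sup>2 / r\<^sup>2\<rceil> + 1 \<le> n"
    then have "1 \<le> n"
      by simp
    have "8 * c\<^sup>2 / r\<^sup>2 \<le> real n"
      using n by linarith
    then have "c\<^sup>2 / real n \<le> r\<^sup>2 / 8"
      using \<open>0 < r\<close> \<open>1 \<le> n\<close> by (simp add: field_simps)
    then have "sqrt (c\<^sup>2 / real n + 2 * K * \<delta>) + 2 * \<delta> < r"
      by (rule sqrt_add_plus_less[OF \<open>0 < r\<close> _ K_\<delta> \<delta>_le])
    moreover have "(\<integral>x. \<bar>(1 / real n) * (\<Sum>k=1..n. Z n k x - expectation (Z n k))\<bar> \<partial>M)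
        \<le> sqrt (c\<^sup>2 / real n + 2 * K * \<delta>) + 2 * \<delta>"
      using centered_average_L1_bound[of "{1..n}" "Z n" K c \<delta>] \<open>1 \<le> n\<close> \<open>0 \<le> c\<close>
      by (simp add: int nonneg uncorr mean c)
    ultimately show "norm ((\<integral>x. \<bar>(1 / real n) * (\<Sum>k=1..n. Z n k x - expectation (Z n k))\<bar> \<partial>M) - 0) < r"
      by simp
  qed
qed

end

theorem mainTheorem14:
  fixes M :: "'a measure" and Z :: "nat \<Rightarrow> nat \<Rightarrow> 'a \<Rightarrow> real"
  assumes "prob_space M"
    and "\<And>n k. 1 \<le> k \<Longrightarrow> k \<le> n \<Longrightarrow> Z n k \<in> borel_measurable M"
    and nonneg: "\<And>n k x. 1 \<le> k \<Longrightarrow> k \<le> n \<Longrightarrow> x \<in> space M \<Longrightarrow> 0 \<le> Z n k x"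
    and ui: "uniformly_integrable M {Z n k | n k. 1 \<le> k \<and> k \<le> n}"
    and uncorr: "\<And>n k l. 1 \<le> k \<Longrightarrow> k \<le> n \<Longrightarrow> 1 \<le> l \<Longrightarrow> l \<le> n \<Longrightarrow> k \<noteq> l \<Longrightarrow>
        integrable M (\<lambda>x. Z n k x * Z n l x) \<and>
        (\<integral>x. Z n k x * Z n l x \<partial>M) = (\<integral>x. Z n k x \<partial>M) * (\<integral>x. Z n l x \<partial>M)"
  shows "converges_in_probability M
           (\<lambda>n x. (1 / real n) * (\<Sum>k=1..n. Z n k x - (\<integral>y. Z n k y \<partial>M))) (\<lambda>x. 0)"
proof -
  interpret prob_space M by fact
  have int: "integrable M (Z n k)" if "1 \<le> k" "k \<le> n" for n k
    using ui that unfolding uniformly_integrable_def by blast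
  have abs_eq: "expectation (\<lambda>x. g \<bar>Z n k x\<bar>) = expectation (\<lambda>x. g (Z n k x))"
    if "1 \<le> k" "k \<le> n" for g :: "real \<Rightarrow> real" and n k
    using nonneg[OF that] by (intro Bochner_Integration.integral_cong) auto
  obtain K where K: "\<forall>f\<in>{Z n k | n k. 1 \<le> k \<and> k \<le> n}. expectation (\<lambda>x. \<bar>f x\<bar>) \<le> K"
    using uniformly_integrable_bounded[OF ui] by blast
  have mean: "expectation (Z n k) \<le> K" if "1 \<le> k" "k \<le> n" for n k
    using bspec[OF K, of "Z n k"] abs_eq[of _ _ "\<lambda>t. t", OF that] that by auto
  have tail: "\<exists>c\<ge>0. \<forall>n k. 1 \<le> k \<longrightarrow> k \<le> n \<longrightarrow> expectation (\<lambda>x. max (Z n k x - c) 0) \<le> \<delta>"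
    if "0 < \<delta>" for \<delta>
  proof -
    obtain c where "0 \<le> c"
      and c: "\<forall>f\<in>{Z n k | n k. 1 \<le> k \<and> k \<le> n}. expectation (\<lambda>x. max (\<bar>f x\<bar> - c) 0) \<le> \<delta>"
      using uniformly_integrable_tail[OF ui \<open>0 < \<delta>\<close>] by blast
    have "expectation (\<lambda>x. max (Z n k x - c) 0) \<le> \<delta>" if "1 \<le> k" "k \<le> n" for n k
      using bspec[OF c, of "Z n k"] abs_eq[of _ _ "\<lambda>t. max (t - c) 0", OF that] that by auto
    then show ?thesis
      using \<open>0 \<le> c\<close> by blast
  qed
  have "(\<lambda>n. \<integral>x. \<bar>(1 / real n) * (\<Sum>k=1..n. Z n k x - expectation (Z n k)) - 0\<bar> \<partial>M) \<longlonglongrightarrow> 0"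
    using triangular_centered_average_L1[OF int nonneg uncorr mean tail] by simp
  moreover have "integrable M (\<lambda>x. (1 / real n) * (\<Sum>k=1..n. Z n k x - expectation (Z n k)) - 0)" for n
    using int by (intro Bochner_Integration.integrable_diff integrable_mult_right
        Bochner_Integration.integrable_sum) auto
  ultimately show ?thesis
    by (intro converges_in_probability_if_L1)
qed

end
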